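(* Let $\Sigma$ be a finite alphabet with at least two symbols, $z\in\{B,A\}$, and $P=\Sigma^{\mathbb{N}}\setminus\mathrm{Ult}$. Then $P$ is a perfect subset of $(\Sigma^{\mathbb{N}},\tau_z)$ (closed, with no isolated points in the subspace topology) and $\mathrm{Ult}$ is countable and open; i.e. $P\cup\mathrm{Ult}$ is the Cantor–Bendixson decomposition of $(\Sigma^{\mathbb{N}},\tau_z)$.
   Context: $\mathrm{Ult}=\{u\cdot v^\omega: u,v\in\Sigma^*, v\neq\emptyset\}$, the ultimately periodic infinite words. A language $L\subseteq\Sigma^{\mathbb{N}}$ is $\omega$-regular if accepted by a Büchi automaton $(\Sigma,Q,Q_i,Q_f,\delta)$ (a run on $\sigma$ is $(q_n)_n$ with $q_0\in Q_i$, $(q_n,\sigma(n),q_{n+1})\in\delta$; accepting iff $q_n\in Q_f$ for infinitely many $n$). $\tau_C$ is the Cantor topology on $\Sigma^{\mathbb{N}}$; $\tau_B$ is generated by the $\omega$-regular languages; $\tau_A$ is generated by the $\tau_C$-closed $\omega$-regular languages. *)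

theory Defs
  imports "HOL-Analysis.Analysis" "HOL-Library.Omega_Words_Fun"
begin

definition Ult :: "'a word set" where
  "Ult = {u \<frown> v\<^sup>\<omega> | u v. v \<noteq> []}"

definition buchi_lang ::
  "nat set \<Rightarrow> nat set \<Rightarrow> nat set \<Rightarrow> (nat \<times> 'a \<times> nat) set \<Rightarrow> 'a word set" where
  "buchi_lang Q Qi Qf \<delta> =
     {\<sigma>. \<exists>r :: nat \<Rightarrow> nat. r 0 \<in> Qi \<and> (\<forall>n. (r n, \<sigma> n, r (Suc n)) \<in> \<delta>)
                \<and> infinite {n. r n \<in> Qf}}"

definition omega_regular :: "'a word set \<Rightarrow> bool" where
  "omega_regular L \<longleftrightarrow>
     (\<exists>Q Qi Qf \<delta>. finite Q \<and> Qi \<subseteq> Q \<and> Qf \<subseteq> Q \<and> \<delta> \<subseteq> Q \<times> UNIV \<times> Q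
        \<and> L = buchi_lang Q Qi Qf \<delta>)"

definition tau_C :: "'a word topology" where
  "tau_C = topology_generated_by {{\<sigma>. \<forall>i<length w. \<sigma> i = w ! i} | w. True}"

definition tau_B :: "'a word topology" where
  "tau_B = topology_generated_by {L. omega_regular L}"

definition tau_A :: "'a word topology" where
  "tau_A = topology_generated_by {L. omega_regular L \<and> closedin tau_C L}"

end

theory Submission
  imports Defs
begin

text \<open>A Buchi automaton can only distinguish finitely many states, so every word of an
\<omega>-regular language can be pumped down: cutting out the segment between two positions where
an accepting run visits the same state yields another word of the language. Finite
intersections of such languages keep this property, so in both topologies every open
neighbourhood of a word x contains a word obtained from x by such a cut. If x is not
ultimately periodic, the cut word differs from x and is again not ultimately periodic; hence
no point of P is isolated in P. Conversely, every ultimately periodic word is the unique word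
accepted by a lasso-shaped automaton, and singletons are Cantor-closed, so Ult is a countable
union of basic open sets.\<close>

subsection \<open>Ultimately periodic words\<close>

definition eventually_periodic :: "'a word \<Rightarrow> bool" where
  "eventually_periodic w \<longleftrightarrow> (\<exists>n p. 0 < p \<and> (\<forall>i\<ge>n. w (i + p) = w i))"

lemma periodic_from_add_mult:
  fixes w :: "'a word" and n p q r :: nat
  assumes "\<forall>i\<ge>n. w (i + p) = w i"
  shows "w (n + q * p + r) = w (n + r)"
proof (induction q)
  case (Suc q)
  have "w (n + Suc q * p + r) = w ((n + q * p + r) + p)" by (simp add: algebra_simps)
  also have "\<dots> = w (n + q * p + r)" using assms by simp
  finally show ?case using Suc by simp
qed simp

lemma periodic_from_mod:
  fixes w :: "'a word" and n p i :: nat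
  assumes "\<forall>i\<ge>n. w (i + p) = w i" "n \<le> i"
  shows "w i = w (n + (i - n) mod p)"
proof -
  have "i = n + (i - n) div p * p + (i - n) mod p"
    using assms(2) div_mult_mod_eq[of "i - n" p] by linarith
  then show ?thesis using periodic_from_add_mult[OF assms(1)] by metis
qed

lemma Ult_iff_eventually_periodic: "w \<in> Ult \<longleftrightarrow> eventually_periodic w"
proof
  assume "w \<in> Ult"
  then obtain u v where w: "w = u \<frown> v\<^sup>\<omega>" and v: "v \<noteq> []" unfolding Ult_def by auto
  have "w (i + length v) = w i" if "i \<ge> length u" for i
  proof -
    obtain j where j: "i = length u + j" using \<open>i \<ge> length u\<close> le_Suc_ex by blast
    have "w (i + length v) = v ! ((j + length v) mod length v)" unfolding w j using v by simp
    also have "\<dots> = w i" unfolding w j using v by simp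
    finally show ?thesis .
  qed
  then show "eventually_periodic w" unfolding eventually_periodic_def using v by blast
next
  assume "eventually_periodic w"
  then obtain n p where p: "0 < p" and h: "\<forall>i\<ge>n. w (i + p) = w i"
    unfolding eventually_periodic_def by blast
  have "w = prefix n w \<frown> (prefix p (suffix n w))\<^sup>\<omega>"
  proof
    fix i
    show "w i = (prefix n w \<frown> (prefix p (suffix n w))\<^sup>\<omega>) i"
      using p periodic_from_mod[OF h, of i] by (cases "i < n") auto
  qed
  moreover have "prefix p (suffix n w) \<noteq> []" using p by simp
  ultimately show "w \<in> Ult" unfolding Ult_def by blast
qed

lemma eventually_periodic_suffix_iff:
  "eventually_periodic (suffix k w) \<longleftrightarrow> eventually_periodic w"
proof
  assume "eventually_periodic (suffix k w)"
  then obtain n p where p: "0 < p" and h: "\<forall>i\<ge>n. w (k + (i + p)) = w (k + i)"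
    unfolding eventually_periodic_def by auto
  have "w (i + p) = w i" if "i \<ge> k + n" for i
    using h[rule_format, of "i - k"] that by simp
  then show "eventually_periodic w" unfolding eventually_periodic_def using p by blast
next
  assume "eventually_periodic w"
  then obtain n p where p: "0 < p" and h: "\<forall>i\<ge>n. w (i + p) = w i"
    unfolding eventually_periodic_def by auto
  have "suffix k w (i + p) = suffix k w i" if "i \<ge> n" for i
    using h[rule_format, of "k + i"] that by (simp add: add.assoc)
  then show "eventually_periodic (suffix k w)" unfolding eventually_periodic_def using p by blast
qed

lemma countable_Ult: "countable (Ult :: ('a::countable) word set)"
proof -
  have "Ult \<subseteq> (\<lambda>(u, v). u \<frown> v\<^sup>\<omega>) ` (UNIV :: ('a list \<times> 'a list) set)"
    unfolding Ult_def by auto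
  then show ?thesis by (rule countable_subset) simp
qed

lemma conc_prefix_suffix_nth:
  "(prefix n x \<frown> suffix m x) i = (if i < n then x i else x (m + (i - n)))"
  by (simp add: conc_def)

lemma conc_prefix_suffix_in_UltD:
  assumes "prefix n x \<frown> suffix m x \<in> Ult"
  shows "x \<in> Ult"
proof -
  have "suffix n (prefix n x \<frown> suffix m x) = suffix m x"
    using suffix_conc_length[of "prefix n x"] by simp
  then show ?thesis
    using assms by (metis Ult_iff_eventually_periodic eventually_periodic_suffix_iff)
qed

lemma conc_prefix_suffix_eq_self_imp_Ult:
  assumes "prefix n x \<frown> suffix m x = x" "n < m"
  shows "x \<in> Ult"
proof -
  have "x (i + (m - n)) = x i" if "i \<ge> n" for i
  proof -
    have "m + (i - n) = i + (m - n)" using that assms(2) by simp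
    then show ?thesis using that fun_cong[OF assms(1), of i] by (simp add: conc_prefix_suffix_nth)
  qed
  then show ?thesis
    unfolding Ult_iff_eventually_periodic eventually_periodic_def using assms(2) zero_less_diff by blast
qed

subsection \<open>Pumpable languages\<close>

text \<open>The colouring c plays the role of the states of an accepting run.\<close>

definition pumpable :: "'a word set \<Rightarrow> bool" where
  "pumpable L \<longleftrightarrow> (\<forall>x\<in>L. \<exists>c :: nat \<Rightarrow> nat. finite (range c) \<and>
     (\<forall>n m. n < m \<longrightarrow> c n = c m \<longrightarrow> prefix n x \<frown> suffix m x \<in> L))"

lemma pumpable_Int:
  assumes "pumpable A" "pumpable B"
  shows "pumpable (A \<inter> B)"
  unfolding pumpable_def
proof
  fix x assume x: "x \<in> A \<inter> B"
  obtain c1 :: "nat \<Rightarrow> nat" where c1: "finite (range c1)"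
    "\<forall>n m. n < m \<longrightarrow> c1 n = c1 m \<longrightarrow> prefix n x \<frown> suffix m x \<in> A"
    using assms(1) x unfolding pumpable_def by blast
  obtain c2 :: "nat \<Rightarrow> nat" where c2: "finite (range c2)"
    "\<forall>n m. n < m \<longrightarrow> c2 n = c2 m \<longrightarrow> prefix n x \<frown> suffix m x \<in> B"
    using assms(2) x unfolding pumpable_def by blast
  let ?c = "\<lambda>n. prod_encode (c1 n, c2 n)"
  have "range ?c \<subseteq> prod_encode ` (range c1 \<times> range c2)" by auto
  then have "finite (range ?c)" using c1(1) c2(1) by (meson finite_SigmaI finite_imageI finite_subset)
  moreover have "\<forall>n m. n < m \<longrightarrow> ?c n = ?c m \<longrightarrow> prefix n x \<frown> suffix m x \<in> A \<inter> B"
    using c1(2) c2(2) by simp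
  ultimately show "\<exists>c :: nat \<Rightarrow> nat. finite (range c) \<and>
      (\<forall>n m. n < m \<longrightarrow> c n = c m \<longrightarrow> prefix n x \<frown> suffix m x \<in> A \<inter> B)" by blast
qed

lemma pumpable_buchi_lang:
  assumes "finite Q" "Qi \<subseteq> Q" "\<delta> \<subseteq> Q \<times> UNIV \<times> Q"
  shows "pumpable (buchi_lang Q Qi Qf \<delta>)"
  unfolding pumpable_def
proof
  fix x assume "x \<in> buchi_lang Q Qi Qf \<delta>"
  then obtain r where r0: "r 0 \<in> Qi" and step: "\<forall>n. (r n, x n, r (Suc n)) \<in> \<delta>"
    and acc: "infinite {n. r n \<in> Qf}" unfolding buchi_lang_def by blast
  have "range r \<subseteq> Q"
  proof
    fix q assume "q \<in> range r"
    then obtain k where "q = r k" by blast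
    then show "q \<in> Q" using r0 step assms(2,3) by (cases k) auto
  qed
  then have "finite (range r)" using assms(1) finite_subset by blast
  moreover have "prefix n x \<frown> suffix m x \<in> buchi_lang Q Qi Qf \<delta>"
    if nm: "n < m" "r n = r m" for n m
  proof -
    \<comment> \<open>the run that skips the loop between positions n and m\<close>
    define r' where "r' i = (if i < n then r i else r (m + (i - n)))" for i
    have "r' 0 \<in> Qi" using r0 nm unfolding r'_def by auto
    moreover have "(r' i, (prefix n x \<frown> suffix m x) i, r' (Suc i)) \<in> \<delta>" for i
    proof -
      consider "Suc i < n" | "Suc i = n" | "i \<ge> n" by linarith
      then show ?thesis
      proof cases
        case 3
        then have "m + (Suc i - n) = Suc (m + (i - n))" by simp
        then show ?thesis using 3 step unfolding r'_def conc_prefix_suffix_nth by auto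
      qed (use step[rule_format, of i] nm in \<open>auto simp: r'_def conc_prefix_suffix_nth\<close>)
    qed
    moreover have "infinite {i. r' i \<in> Qf}"
      unfolding infinite_nat_iff_unbounded
    proof
      fix k
      obtain j where j: "j > k + m" "r j \<in> Qf" using acc unfolding infinite_nat_iff_unbounded by blast
      then have "r' (j - m + n) \<in> Qf" unfolding r'_def by auto
      then show "\<exists>i>k. i \<in> {i. r' i \<in> Qf}" using j(1) by (intro exI[of _ "j - m + n"]) auto
    qed
    ultimately show ?thesis unfolding buchi_lang_def by blast
  qed
  ultimately show "\<exists>c :: nat \<Rightarrow> nat. finite (range c) \<and>
      (\<forall>n m. n < m \<longrightarrow> c n = c m \<longrightarrow> prefix n x \<frown> suffix m x \<in> buchi_lang Q Qi Qf \<delta>)"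
    by blast
qed

lemma omega_regular_pumpable: "omega_regular L \<Longrightarrow> pumpable L"
  unfolding omega_regular_def using pumpable_buchi_lang by blast

lemma pumpable_non_Ult_neighbour:
  assumes "pumpable L" "x \<in> L" "x \<notin> Ult"
  obtains y where "y \<in> L" "y \<noteq> x" "y \<notin> Ult"
proof -
  obtain c :: "nat \<Rightarrow> nat" where c: "finite (range c)"
    "\<forall>n m. n < m \<longrightarrow> c n = c m \<longrightarrow> prefix n x \<frown> suffix m x \<in> L"
    using assms(1,2) unfolding pumpable_def by blast
  have "\<not> inj c" using c(1) finite_imageD by blast
  then obtain n m where "n < m" "c n = c m"
    unfolding inj_def by (metis linorder_neqE_nat)
  then show ?thesis
    using that c(2) assms(3) conc_prefix_suffix_eq_self_imp_Ult conc_prefix_suffix_in_UltD by metis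
qed

subsection \<open>Topologies generated by pumpable languages\<close>

lemma openin_topology_generated_by_Int_closed_nbhd:
  assumes Pr_Int: "\<And>A B. Pr A \<Longrightarrow> Pr B \<Longrightarrow> Pr (A \<inter> B)"
    and Pr_S: "\<And>s. s \<in> S \<Longrightarrow> Pr s"
    and "openin (topology_generated_by S) U" "x \<in> U"
  shows "\<exists>B. Pr B \<and> x \<in> B \<and> B \<subseteq> U"
proof -
  have "generate_topology_on S U" using assms(3) by (simp add: openin_topology_generated_by_iff)
  then show ?thesis using assms(4)
  proof (induction arbitrary: x rule: generate_topology_on.induct)
    case (Int a b)
    then obtain A B where "Pr A" "x \<in> A" "A \<subseteq> a" "Pr B" "x \<in> B" "B \<subseteq> b" by blast
    then show ?case using Pr_Int by (intro exI[of _ "A \<inter> B"]) auto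
  qed (use Pr_S in blast)+
qed

context
  fixes S :: "'a word set set"
  assumes pumpable_S: "\<And>L. L \<in> S \<Longrightarrow> pumpable L"
    and UNIV_S: "UNIV \<in> S"
    and singleton_Ult_S: "\<And>w. w \<in> Ult \<Longrightarrow> {w} \<in> S"
begin

lemma openin_generated_Ult: "openin (topology_generated_by S) Ult"
proof -
  have "generate_topology_on S (\<Union>w\<in>Ult. {w})"
    using singleton_Ult_S by (intro generate_topology_on.UN generate_topology_on.Basis) blast
  then show ?thesis by (simp add: openin_topology_generated_by_iff)
qed

lemma closedin_generated_not_Ult: "closedin (topology_generated_by S) (UNIV - Ult)"
proof -
  have "\<Union>S = UNIV" using UNIV_S by blast
  then show ?thesis using openin_generated_Ult by (simp add: closedin_def Diff_Diff_Int)
qed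

lemma not_isolated_generated_not_Ult:
  assumes "x \<notin> Ult"
  shows "\<not> openin (subtopology (topology_generated_by S) (UNIV - Ult)) {x}"
proof
  assume "openin (subtopology (topology_generated_by S) (UNIV - Ult)) {x}"
  then obtain T where T: "openin (topology_generated_by S) T" "{x} = T \<inter> (UNIV - Ult)"
    unfolding openin_subtopology by blast
  then obtain B where "pumpable B" "x \<in> B" "B \<subseteq> T"
    using openin_topology_generated_by_Int_closed_nbhd[where Pr = pumpable, OF pumpable_Int pumpable_S T(1)]
    by blast
  then obtain y where "y \<in> B" "y \<noteq> x" "y \<notin> Ult"
    using pumpable_non_Ult_neighbour assms by blast
  then show False using T(2) \<open>B \<subseteq> T\<close> by blast
qed

lemma Cantor_Bendixson_generated_Ult:
  "closedin (topology_generated_by S) (UNIV - Ult)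
   \<and> (\<forall>x\<in>UNIV - Ult. \<not> openin (subtopology (topology_generated_by S) (UNIV - Ult)) {x})
   \<and> openin (topology_generated_by S) Ult"
  using closedin_generated_not_Ult not_isolated_generated_not_Ult openin_generated_Ult by blast

end

subsection \<open>Ultimately periodic singletons are basic open sets\<close>

lemma omega_regular_singleton_Ult:
  assumes "w \<in> Ult"
  shows "omega_regular {w}"
proof -
  obtain n p where p: "0 < p" and h: "\<forall>i\<ge>n. w (i + p) = w i"
    using assms unfolding Ult_iff_eventually_periodic eventually_periodic_def by blast
  define N where "N = n + p"
  define next_state where "next_state i = (if Suc i < N then Suc i else n)" for i
  define \<delta> where "\<delta> = {(i, w i, next_state i) | i. i < N}"
  define pos where "pos k = (if k < n then k else n + (k - n) mod p)" for k
  have pos_N: "pos k < N" for k unfolding pos_def N_def using p by auto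
  have pos_letter: "w (pos k) = w k" for k unfolding pos_def using periodic_from_mod[OF h, of k] by auto
  have pos_Suc: "pos (Suc k) = next_state (pos k)" for k
  proof -
    consider "Suc k < n" | "Suc k = n" | "k \<ge> n" by linarith
    then show ?thesis
    proof cases
      case 3
      then have "pos (Suc k) = n + Suc (k - n) mod p" by (simp add: pos_def Suc_diff_le)
      then show ?thesis
        using 3 mod_less_divisor[OF p, of "k - n"] by (auto simp: mod_Suc next_state_def N_def pos_def)
    qed (use p in \<open>auto simp: pos_def next_state_def N_def\<close>)
  qed
  have "pos 0 = 0" unfolding pos_def using p by auto
  have "buchi_lang {..<N} {0} {..<N} \<delta> = {w}"
  proof
    have "(pos k, w (pos k), next_state (pos k)) \<in> \<delta>" for k
      unfolding \<delta>_def using pos_N by blast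
    then have "(pos k, w k, pos (Suc k)) \<in> \<delta>" for k
      by (simp add: pos_Suc pos_letter)
    moreover have "{k. pos k \<in> {..<N}} = UNIV" using pos_N by auto
    ultimately show "{w} \<subseteq> buchi_lang {..<N} {0} {..<N} \<delta>"
      unfolding buchi_lang_def using \<open>pos 0 = 0\<close> by auto
  next
    show "buchi_lang {..<N} {0} {..<N} \<delta> \<subseteq> {w}"
    proof
      fix \<sigma> assume "\<sigma> \<in> buchi_lang {..<N} {0} {..<N} \<delta>"
      then obtain r where r0: "r 0 = 0" and step: "\<forall>k. (r k, \<sigma> k, r (Suc k)) \<in> \<delta>"
        unfolding buchi_lang_def by blast
      have st: "r (Suc k) = next_state (r k) \<and> \<sigma> k = w (r k)" for k
        using step unfolding \<delta>_def by auto
      have "r k = pos k" for k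
        by (induction k) (use r0 \<open>pos 0 = 0\<close> st pos_Suc in simp_all)
      then show "\<sigma> \<in> {w}" using st pos_letter by auto
    qed
  qed
  moreover have "\<delta> \<subseteq> {..<N} \<times> UNIV \<times> {..<N}"
    unfolding \<delta>_def next_state_def N_def using p by auto
  moreover have "{0} \<subseteq> {..<N}" using p by (simp add: N_def)
  ultimately show ?thesis unfolding omega_regular_def by (metis finite_lessThan order_refl)
qed

lemma omega_regular_UNIV: "omega_regular (UNIV :: 'a word set)"
proof -
  have "buchi_lang {0} {0} {0} ({0} \<times> UNIV \<times> {0}) = (UNIV :: 'a word set)"
    unfolding buchi_lang_def by (auto intro!: exI[of _ "\<lambda>_. 0"])
  then show ?thesis unfolding omega_regular_def by (metis finite.intros order_refl)
qed

definition cylinder :: "'a list \<Rightarrow> 'a word set" where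
  "cylinder u = {\<sigma>. \<forall>i<length u. \<sigma> i = u ! i}"

lemma tau_C_cylinder: "tau_C = topology_generated_by (range cylinder)"
  unfolding tau_C_def cylinder_def by (simp add: full_SetCompr_eq)

lemma topspace_tau_C: "topspace tau_C = UNIV"
  using cylinder_def[of "[]"] by (auto simp: tau_C_cylinder)

lemma prefix_mem_cylinder_iff: "\<tau> \<in> cylinder (prefix n \<sigma>) \<longleftrightarrow> (\<forall>j<n. \<tau> j = \<sigma> j)"
  by (simp add: cylinder_def)

lemma openin_tau_C_cylinder: "openin tau_C (cylinder u)"
  unfolding tau_C_cylinder openin_topology_generated_by_iff by (rule generate_topology_on.Basis) simp

lemma closedin_tau_C_singleton: "closedin tau_C {w}"
proof -
  let ?U = "\<Union>i. \<Union>\<sigma>\<in>{\<sigma>. \<sigma> i \<noteq> w i}. cylinder (prefix (Suc i) \<sigma>)"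
  have "UNIV - {w} = ?U"
  proof
    show "UNIV - {w} \<subseteq> ?U"
    proof
      fix \<sigma> assume "\<sigma> \<in> UNIV - {w}"
      then obtain i where "\<sigma> i \<noteq> w i" by auto
      then show "\<sigma> \<in> ?U" by (auto simp: prefix_mem_cylinder_iff simp del: subseq_to_Suc)
    qed
    show "?U \<subseteq> UNIV - {w}"
    proof
      fix \<tau> assume "\<tau> \<in> ?U"
      then obtain i \<sigma> where "\<sigma> i \<noteq> w i" "\<forall>j<Suc i. \<tau> j = \<sigma> j"
        by (auto simp: prefix_mem_cylinder_iff simp del: subseq_to_Suc)
      then show "\<tau> \<in> UNIV - {w}" by (metis Diff_iff UNIV_I lessI singletonD)
    qed
  qed
  moreover have "openin tau_C ?U" by (intro openin_Union) (auto simp: openin_tau_C_cylinder)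
  ultimately show ?thesis unfolding closedin_def topspace_tau_C by simp
qed

theorem mainTheorem15:
  fixes \<tau> :: "('a::finite) word topology"
  assumes "CARD('a) \<ge> 2"
    and "\<tau> \<in> {tau_B, tau_A}"
  defines "P \<equiv> UNIV - Ult"
  shows "closedin \<tau> P
         \<and> (\<forall>x\<in>P. \<not> openin (subtopology \<tau> P) {x})
         \<and> countable (Ult :: 'a word set)
         \<and> openin \<tau> Ult"
proof -
  have "closedin tau_C UNIV" by (metis closedin_topspace topspace_tau_C)
  consider (B) "\<tau> = tau_B" | (A) "\<tau> = tau_A" using assms(2) by blast
  then have "closedin \<tau> P \<and> (\<forall>x\<in>P. \<not> openin (subtopology \<tau> P) {x}) \<and> openin \<tau> Ult"
  proof cases
    case B
    show ?thesis unfolding B tau_B_def P_def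
      by (rule Cantor_Bendixson_generated_Ult)
        (simp_all add: omega_regular_pumpable omega_regular_UNIV omega_regular_singleton_Ult)
  next
    case A
    show ?thesis unfolding A tau_A_def P_def
      by (rule Cantor_Bendixson_generated_Ult)
        (use \<open>closedin tau_C UNIV\<close> in \<open>simp_all add: omega_regular_pumpable omega_regular_UNIV
          omega_regular_singleton_Ult closedin_tau_C_singleton\<close>)
  qed
  then show ?thesis using countable_Ult by blast
qed

end
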